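(* Let $\mathcal C$ be a class of finite simple graphs and let $f:\mathbb{N}\to\mathbb{N}$ be an unbounded non-decreasing function with $f(x)\le x$ for all $x$. If $\sup_{G\in\mathcal C} N_f(G,r)<\infty$ for every $r\in\mathbb{N}$, then $\mathcal C$ has bounded expansion.
   Context: For a finite simple graph $G$, a function $f:\mathbb{N}\to\mathbb{N}$ and a positive integer $p$, $N_f(G,p)$ denotes the minimum number of colours in a colouring of the edges of $G$ such that every cycle $\gamma$ of $G$ receives at least $\min(f(|\gamma|),p+1)$ distinct colours, where $|\gamma|$ is the length of $\gamma$. A simple graph $H$ is a shallow minor of $G$ at depth $r$ if there are pairwise vertex-disjoint subtrees $T_1,\dots,T_k$ of $G$, each having a root from which every vertex of the tree is at distance at most $r$ in the tree, such that $H$ is isomorphic to a subgraph of the graph with vertex set $\{T_1,\dots,T_k\}$ in which $T_i,T_j$ are adjacent iff some edge of $G$ joins a vertex of $T_i$ to a vertex of $T_j$. $\nabla_r(G)$ is the maximum of $\|H\|/|H|$ over all shallow minors $H$ of $G$ at depth $r$. A class $\mathcal C$ has bounded expansion if $\sup_{G\in\mathcal C}\nabla_r(G)<\infty$ for every integer $r\ge 0$. *)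

theory Defs
  imports Complex_Main
begin

type_synonym 'a graph = "'a set \<times> 'a set set"

definition simple_graph :: "'a graph \<Rightarrow> bool" where
  "simple_graph G \<longleftrightarrow> finite (fst G) \<and>
     (\<forall>e\<in>snd G. \<exists>u v. u \<noteq> v \<and> u \<in> fst G \<and> v \<in> fst G \<and> e = {u, v})"

definition cycle_edges :: "'a list \<Rightarrow> 'a set set" where
  "cycle_edges vs = (\<lambda>i. {vs ! i, vs ! ((i + 1) mod length vs)}) ` {..<length vs}"

definition is_cycle :: "'a graph \<Rightarrow> 'a list \<Rightarrow> bool" where
  "is_cycle G vs \<longleftrightarrow> length vs \<ge> 3 \<and> distinct vs \<and> set vs \<subseteq> fst G \<and>
     cycle_edges vs \<subseteq> snd G"

definition N_f :: "(nat \<Rightarrow> nat) \<Rightarrow> 'a graph \<Rightarrow> nat \<Rightarrow> nat" where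
  "N_f f G p = (LEAST k. \<exists>c :: 'a set \<Rightarrow> nat. c ` snd G \<subseteq> {..<k} \<and>
      (\<forall>vs. is_cycle G vs \<longrightarrow> card (c ` cycle_edges vs) \<ge> min (f (length vs)) (p + 1)))"

definition is_walk :: "'a graph \<Rightarrow> 'a list \<Rightarrow> bool" where
  "is_walk G xs \<longleftrightarrow> xs \<noteq> [] \<and> set xs \<subseteq> fst G \<and>
     (\<forall>i. Suc i < length xs \<longrightarrow> {xs ! i, xs ! Suc i} \<in> snd G)"

definition dist_le :: "'a graph \<Rightarrow> 'a \<Rightarrow> 'a \<Rightarrow> nat \<Rightarrow> bool" where
  "dist_le G u v r \<longleftrightarrow> (\<exists>xs. is_walk G xs \<and> hd xs = u \<and> last xs = v \<and> length xs \<le> r + 1)"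

definition connected_graph :: "'a graph \<Rightarrow> bool" where
  "connected_graph G \<longleftrightarrow> (\<forall>u\<in>fst G. \<forall>v\<in>fst G. \<exists>r. dist_le G u v r)"

definition is_tree :: "'a graph \<Rightarrow> bool" where
  "is_tree G \<longleftrightarrow> simple_graph G \<and> fst G \<noteq> {} \<and> connected_graph G \<and> (\<nexists>vs. is_cycle G vs)"

definition rooted_subtree :: "'a graph \<Rightarrow> nat \<Rightarrow> 'a graph \<Rightarrow> bool" where
  "rooted_subtree G r T \<longleftrightarrow> fst T \<subseteq> fst G \<and> snd T \<subseteq> snd G \<and> is_tree T \<and>
     (\<exists>root\<in>fst T. \<forall>v\<in>fst T. dist_le T root v r)"

definition trees_adjacent :: "'a graph \<Rightarrow> 'a graph \<Rightarrow> 'a graph \<Rightarrow> bool" where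
  "trees_adjacent G T1 T2 \<longleftrightarrow> (\<exists>x\<in>fst T1. \<exists>y\<in>fst T2. {x, y} \<in> snd G)"

definition shallow_minor_model ::
  "'a graph \<Rightarrow> nat \<Rightarrow> 'a graph set \<Rightarrow> 'a graph graph \<Rightarrow> bool" where
  "shallow_minor_model G r Ts H \<longleftrightarrow>
     (\<forall>T\<in>Ts. rooted_subtree G r T) \<and>
     (\<forall>T1\<in>Ts. \<forall>T2\<in>Ts. T1 \<noteq> T2 \<longrightarrow> fst T1 \<inter> fst T2 = {}) \<and>
     fst H \<subseteq> Ts \<and>
     snd H \<subseteq> {{T1, T2} | T1 T2. T1 \<in> fst H \<and> T2 \<in> fst H \<and> T1 \<noteq> T2 \<and> trees_adjacent G T1 T2}"

text \<open>nabla_r(G): maximum of ||H||/|H| over shallow minors H at depth r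
(isomorphism-invariant, so it suffices to range over the concrete models).\<close>

definition nabla :: "nat \<Rightarrow> 'a graph \<Rightarrow> real" where
  "nabla r G = Sup {real (card (snd H)) / real (card (fst H)) | H. \<exists>Ts. shallow_minor_model G r Ts H}"

definition bounded_expansion :: "'a graph set \<Rightarrow> bool" where
  "bounded_expansion C \<longleftrightarrow> (\<forall>r. \<exists>M::real. \<forall>G\<in>C. nabla r G \<le> M)"

end

theory Submission
  imports Defs
begin

text \<open>
  Fix a depth r, let M bound N_f(G, 2r+1) over the class and choose L with f(L) \<ge> 2r+2.
  Colour G optimally; since f is monotone, every cycle of G of length at least L then
  sees at least 2r+2 colours.  Let H be a shallow minor of G at depth r.  Every edge AB
  of H is realised by an edge xy of G with x \<in> A, y \<in> B; its trace is the set of colours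
  on xy and on the root-to-x and root-to-y walks of length at most r in the trees A and B,
  a set of at most 2r+1 of the M colours.  If the edges of H with a common trace S were
  more than L |H| many, they would contain a cycle of length at least L+2; following
  the realising edges and the root walks inside the trees turns it into a cycle of G of
  length at least L using only colours from S, which is impossible.  Hence
  ||H|| \<le> 2^M L |H|, and nabla_r is bounded by 2^M L on the whole class.
\<close>

fun path_edges :: "'a list \<Rightarrow> 'a set set" where
  "path_edges (x # y # zs) = insert {x, y} (path_edges (y # zs))"
| "path_edges _ = {}"

lemma path_edges_Cons: "xs \<noteq> [] \<Longrightarrow> path_edges (x # xs) = insert {x, hd xs} (path_edges xs)"
  by (cases xs) auto

lemma path_edges_nth:
  "e \<in> path_edges xs \<longleftrightarrow> (\<exists>i. Suc i < length xs \<and> e = {xs ! i, xs ! Suc i})"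
proof (induction xs rule: path_edges.induct)
  case (1 x y zs)
  have "e \<in> path_edges (x # y # zs) \<longleftrightarrow>
        e = {x, y} \<or> (\<exists>i. Suc i < length (y # zs) \<and> e = {(y # zs) ! i, (y # zs) ! Suc i})"
    using "1.IH" by auto
  also have "\<dots> \<longleftrightarrow> (\<exists>i. Suc i < length (x # y # zs) \<and> e = {(x # y # zs) ! i, (x # y # zs) ! Suc i})"
    by (auto simp: less_Suc_eq_0_disj)
  finally show ?case .
qed auto

lemma path_edges_append:
  "xs \<noteq> [] \<Longrightarrow> ys \<noteq> [] \<Longrightarrow>
   path_edges (xs @ ys) = path_edges xs \<union> path_edges ys \<union> {{last xs, hd ys}}"
  by (induction xs rule: path_edges.induct) (auto simp: path_edges_Cons)

lemma path_edges_rev: "path_edges (rev xs) = path_edges xs"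
proof (induction xs)
  case (Cons x xs)
  show ?case
  proof (cases "xs = []")
    case False
    then have "path_edges (rev (x # xs)) = path_edges (rev xs) \<union> {{last (rev xs), x}}"
      using path_edges_append[of "rev xs" "[x]"] by simp
    then show ?thesis using False Cons.IH by (auto simp: path_edges_Cons last_rev insert_commute)
  qed simp
qed simp

lemma finite_path_edges: "finite (path_edges xs)"
  by (induction xs rule: path_edges.induct) auto

lemma card_path_edges: "card (path_edges xs) \<le> length xs - 1"
  by (induction xs rule: path_edges.induct) (auto intro: le_trans[OF card_insert_le_m1])

lemma walk_path_edges: "is_walk G xs \<Longrightarrow> path_edges xs \<subseteq> snd G"
  unfolding is_walk_def by (auto simp: path_edges_nth)

lemma path_edges_split: "path_edges (xs @ y # ys) = path_edges (xs @ [y]) \<union> path_edges (y # ys)"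
  by (induction xs rule: path_edges.induct) auto

lemma path_edges_append_sub: "path_edges xs \<union> path_edges ys \<subseteq> path_edges (xs @ ys)"
proof -
  have "path_edges xs \<subseteq> path_edges (xs @ ys)"
    by (induction xs rule: path_edges.induct) (auto simp: path_edges_Cons)
  moreover have "path_edges ys \<subseteq> path_edges (xs @ ys)"
  proof (induction xs)
    case (Cons x xs)
    then show ?case by (cases "xs @ ys") auto
  qed simp
  ultimately show ?thesis by blast
qed

text \<open>A walk can be shortened to a path (a walk without repeated vertices) with the same
  ends, using only vertices and edges of the walk: cut out the part between two
  occurrences of a repeated vertex.\<close>

lemma walk_to_path:
  assumes "xs \<noteq> []"
  shows "\<exists>ys. distinct ys \<and> ys \<noteq> [] \<and> hd ys = hd xs \<and> last ys = last xs \<and>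
             set ys \<subseteq> set xs \<and> path_edges ys \<subseteq> path_edges xs"
  using assms
proof (induction "length xs" arbitrary: xs rule: less_induct)
  case less
  show ?case
  proof (cases "distinct xs")
    case True
    then show ?thesis using less.prems by blast
  next
    case False
    then obtain a b c y where xs: "xs = a @ [y] @ b @ [y] @ c"
      using not_distinct_decomp by blast
    let ?xs' = "a @ y # c"
    have "path_edges ?xs' = path_edges (a @ [y]) \<union> path_edges (y # c)"
      by (rule path_edges_split)
    also have "\<dots> \<subseteq> path_edges xs"
      using path_edges_append_sub[of "a @ [y]" "b @ [y] @ c"]
        path_edges_append_sub[of "a @ y # b" "y # c"] xs by auto
    finally have "path_edges ?xs' \<subseteq> path_edges xs" .
    moreover have "hd ?xs' = hd xs" "last ?xs' = last xs" "set ?xs' \<subseteq> set xs"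
      using xs by (cases a; cases c; auto)+
    moreover have "length ?xs' < length xs" using xs by simp
    ultimately show ?thesis using less.hyps[of ?xs'] by fastforce
  qed
qed

definition linked :: "'a set set \<Rightarrow> 'a set \<Rightarrow> 'a \<Rightarrow> 'a \<Rightarrow> bool" where
  "linked E X p q \<longleftrightarrow>
     (\<exists>ws. ws \<noteq> [] \<and> hd ws = p \<and> last ws = q \<and> set ws \<subseteq> X \<and> path_edges ws \<subseteq> E)"

lemma linked_sym: "linked E X p q \<Longrightarrow> linked E X q p"
  unfolding linked_def by (metis hd_rev last_rev path_edges_rev rev_is_Nil_conv set_rev)

lemma linked_trans:
  assumes "linked E X p q" "linked E X q s"
  shows "linked E X p s"
proof -
  obtain xs ys where xs: "xs \<noteq> []" "hd xs = p" "last xs = q" "set xs \<subseteq> X" "path_edges xs \<subseteq> E"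
    and ys: "ys \<noteq> []" "hd ys = q" "last ys = s" "set ys \<subseteq> X" "path_edges ys \<subseteq> E"
    using assms unfolding linked_def by blast
  show ?thesis
  proof (cases "tl ys = []")
    case True
    then have "ys = [q]" using ys(1,2) by (cases ys) auto
    then show ?thesis using xs ys(3) unfolding linked_def by auto
  next
    case False
    have "path_edges ys = insert {q, hd (tl ys)} (path_edges (tl ys))"
      using path_edges_Cons[OF False, of q] ys(1,2) by (cases ys) auto
    then have "path_edges (xs @ tl ys) \<subseteq> E"
      using path_edges_append[OF xs(1) False] xs ys by auto
    moreover have "set (tl ys) \<subseteq> X" using ys(4) by (cases ys) auto
    ultimately show ?thesis unfolding linked_def
      using xs ys False by (intro exI[of _ "xs @ tl ys"]) (auto simp: last_tl)
  qed
qed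

definition is_path :: "'a set \<Rightarrow> 'a set set \<Rightarrow> 'a list \<Rightarrow> bool" where
  "is_path V E ws \<longleftrightarrow> ws \<noteq> [] \<and> distinct ws \<and> set ws \<subseteq> V \<and> path_edges ws \<subseteq> E"

lemma linked_path:
  assumes "linked E X p q"
  shows "\<exists>ws. is_path X E ws \<and> hd ws = p \<and> last ws = q"
  using assms walk_to_path unfolding linked_def is_path_def by (metis order_trans)

lemma is_cycle_mono: "is_cycle (V', E') vs \<Longrightarrow> V' \<subseteq> V \<Longrightarrow> E' \<subseteq> E \<Longrightarrow> is_cycle (V, E) vs"
  unfolding is_cycle_def by auto

lemma cycle_edges_closed_path: "vs \<noteq> [] \<Longrightarrow> cycle_edges vs \<subseteq> path_edges (vs @ [hd vs])"
proof
  fix e assume ne: "vs \<noteq> []" and "e \<in> cycle_edges vs"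
  then obtain i where i: "i < length vs" "e = {vs ! i, vs ! ((i + 1) mod length vs)}"
    unfolding cycle_edges_def by auto
  have "e = {(vs @ [hd vs]) ! i, (vs @ [hd vs]) ! Suc i}"
  proof (cases "Suc i < length vs")
    case False
    then have "Suc i = length vs" using i by simp
    then show ?thesis using i ne by (simp add: nth_append hd_conv_nth)
  qed (use i in \<open>simp add: nth_append\<close>)
  then show "e \<in> path_edges (vs @ [hd vs])"
    unfolding path_edges_nth using i by (intro exI[of _ i]) simp
qed

lemma card_cycle_edges:
  assumes "distinct vs" "length vs \<ge> 3"
  shows "card (cycle_edges vs) = length vs"
proof -
  let ?n = "length vs" and ?s = "\<lambda>i. (i + 1) mod length vs"
  have "inj_on (\<lambda>i. {vs ! i, vs ! ?s i}) {..<?n}"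
  proof (rule inj_onI, rule ccontr)
    fix i j assume i: "i \<in> {..<?n}" and j: "j \<in> {..<?n}" and "i \<noteq> j"
      and eq: "{vs ! i, vs ! ?s i} = {vs ! j, vs ! ?s j}"
    have "0 < ?n" using assms(2) by linarith
    then have s: "?s i < ?n" "?s j < ?n" by simp_all
    have "vs ! i \<noteq> vs ! j" using i j \<open>i \<noteq> j\<close> assms(1) nth_eq_iff_index_eq by auto
    then have "vs ! i = vs ! ?s j" "vs ! ?s i = vs ! j" using eq by (auto simp: doubleton_eq_iff)
    then have "i = ?s j" "?s i = j"
      using i j s assms(1) nth_eq_iff_index_eq by (metis lessThan_iff)+
    then show False using i j assms(2) by (auto simp: mod_Suc split: if_splits)
  qed
  then show ?thesis unfolding cycle_edges_def by (simp add: card_image)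
qed

lemma path_edges_concat:
  assumes "\<forall>P\<in>set Q. P \<noteq> [] \<and> path_edges P \<subseteq> E"
    and "\<forall>j. Suc j < length Q \<longrightarrow> {last (Q ! j), hd (Q ! Suc j)} \<in> E"
  shows "path_edges (concat Q) \<subseteq> E"
  using assms
proof (induction Q)
  case (Cons P Q)
  show ?case
  proof (cases "Q = []")
    case False
    have "path_edges (concat Q) \<subseteq> E"
    proof (rule Cons.IH)
      show "\<forall>j. Suc j < length Q \<longrightarrow> {last (Q ! j), hd (Q ! Suc j)} \<in> E"
        using Cons.prems(2) by (metis Suc_less_eq length_Cons nth_Cons_Suc)
    qed (use Cons.prems in auto)
    moreover have "concat Q \<noteq> []" "hd (concat Q) = hd (Q ! 0)"
      using False Cons.prems by (cases Q; auto)+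
    moreover have "{last P, hd (Q ! 0)} \<in> E" using Cons.prems(2) False by force
    ultimately show ?thesis using path_edges_append[of P "concat Q"] Cons.prems by auto
  qed (use Cons.prems in simp)
qed simp

lemma cycle_from_pieces:
  fixes Pc :: "nat \<Rightarrow> 'a list" and X :: "nat \<Rightarrow> 'a set"
  assumes pieces: "\<And>i. i < k \<Longrightarrow> is_path (X i) E (Pc i)"
    and disj: "\<And>i j. i < k \<Longrightarrow> j < k \<Longrightarrow> i \<noteq> j \<Longrightarrow> X i \<inter> X j = {}"
    and junc: "\<And>j. Suc j < k \<Longrightarrow> {last (Pc j), hd (Pc (Suc j))} \<in> E"
    and wrap: "{last (Pc (k - 1)), hd (Pc 0)} \<in> E"
    and sub: "\<And>i. i < k \<Longrightarrow> X i \<subseteq> U"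
    and k: "3 \<le> k"
  shows "\<exists>vs. is_cycle (U, E) vs \<and> k \<le> length vs"
proof -
  define Q where "Q = map Pc [0..<k]"
  define vs where "vs = concat Q"
  have Q: "P \<noteq> [] \<and> distinct P \<and> path_edges P \<subseteq> E" if "P \<in> set Q" for P
    using that pieces[unfolded is_path_def] unfolding Q_def by fastforce
  have Qdisj: "set (Pc i) \<inter> set (Pc j) = {}" if "i < k" "j < k" "i \<noteq> j" for i j
    using pieces[OF that(1)] pieces[OF that(2)] disj[OF that] unfolding is_path_def by blast
  have "inj_on Pc {0..<k}"
    by (rule inj_onI) (metis Qdisj atLeastLessThan_iff disjoint_iff pieces is_path_def list.set_sel(1))
  then have "distinct vs" unfolding vs_def Q_def
  proof (intro distinct_concat)
    fix ys zs assume "ys \<in> set (map Pc [0..<k])" "zs \<in> set (map Pc [0..<k])" "ys \<noteq> zs"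
    then show "set ys \<inter> set zs = {}" using Qdisj by auto blast
  qed (use Q in \<open>auto simp: distinct_map Q_def\<close>)
  moreover have "k \<le> length vs"
  proof -
    have "length vs = (\<Sum>P\<leftarrow>Q. length P)" unfolding vs_def by (simp add: length_concat)
    also have "\<dots> \<ge> (\<Sum>P\<leftarrow>Q. 1)" using Q by (intro sum_list_mono) (simp add: Suc_le_eq)
    also have "(\<Sum>P\<leftarrow>Q. 1) = k" unfolding Q_def by (simp add: o_def sum_list_triv)
    finally show ?thesis .
  qed
  moreover have "set vs \<subseteq> U" unfolding vs_def Q_def using pieces sub by (fastforce simp: is_path_def)
  moreover have "cycle_edges vs \<subseteq> E"
  proof -
    have vsne: "vs \<noteq> []" using calculation(2) k by auto
    have "path_edges vs \<subseteq> E" unfolding vs_def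
      using Q junc by (intro path_edges_concat) (auto simp: Q_def simp del: upt_Suc)
    moreover have "last vs = last (Pc (k - 1))" "hd vs = hd (Pc 0)"
    proof -
      have Q1: "Q = map Pc [0..<k - 1] @ [Pc (k - 1)]" and Q2: "Q = Pc 0 # map Pc [1..<k]"
        using k unfolding Q_def by (cases k; simp add: upt_conv_Cons)+
      have ne: "Pc (k - 1) \<noteq> []" "Pc 0 \<noteq> []" using Q unfolding Q_def using k by auto
      show "last vs = last (Pc (k - 1))" unfolding vs_def using ne by (subst Q1) simp
      show "hd vs = hd (Pc 0)" unfolding vs_def using ne by (subst Q2) simp
    qed
    ultimately have "path_edges (vs @ [hd vs]) \<subseteq> E"
      using path_edges_append[of vs "[hd vs]"] vsne wrap by auto
    then show ?thesis using cycle_edges_closed_path[OF vsne] by auto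
  qed
  ultimately show ?thesis unfolding is_cycle_def using k by (intro exI[of _ vs]) auto
qed

lemma cycle_lift:
  fixes us :: "'b list" and X P :: "'b \<Rightarrow> 'a set"
  assumes cyc: "is_cycle (V, F) us"
    and disj: "\<And>A B. A \<in> V \<Longrightarrow> B \<in> V \<Longrightarrow> A \<noteq> B \<Longrightarrow> X A \<inter> X B = {}"
    and sub: "\<And>A. A \<in> V \<Longrightarrow> X A \<subseteq> U"
    and bridge: "\<And>A B. {A, B} \<in> F \<Longrightarrow> \<exists>x\<in>P A. \<exists>y\<in>P B. {x, y} \<in> E"
    and inner: "\<And>A p q. A \<in> V \<Longrightarrow> p \<in> P A \<Longrightarrow> q \<in> P A \<Longrightarrow> linked E (X A) p q"
  shows "\<exists>vs. is_cycle (U, E) vs \<and> length us \<le> length vs"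
proof -
  define k where "k = length us"
  define nxt where "nxt i = Suc i mod k" for i
  define prv where "prv i = (i + k - 1) mod k" for i
  have k3: "3 \<le> k" and usd: "distinct us" and usV: "\<And>i. i < k \<Longrightarrow> us ! i \<in> V"
    using cyc unfolding is_cycle_def k_def by auto
  have prv: "prv i < k" "nxt (prv i) = i" if "i < k" for i
  proof -
    have "prv i = (if i = 0 then k - 1 else i - 1)"
      using that k3 unfolding prv_def by (cases i) simp_all
    then show "prv i < k" "nxt (prv i) = i" using that k3 unfolding nxt_def by auto
  qed
  have prv_Suc: "prv (Suc j) = j" if "Suc j < k" for j
    using that unfolding prv_def by simp
  have "{us ! i, us ! nxt i} \<in> F" if "i < k" for i
    using that cyc unfolding is_cycle_def cycle_edges_def nxt_def k_def by auto
  then have "\<forall>i. \<exists>x y. i < k \<longrightarrow> x \<in> P (us ! i) \<and> y \<in> P (us ! nxt i) \<and> {x, y} \<in> E"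
    using bridge by blast
  then obtain x y where xy: "\<And>i. i < k \<Longrightarrow> x i \<in> P (us ! i) \<and> y i \<in> P (us ! nxt i) \<and> {x i, y i} \<in> E"
    by metis
  \<comment> \<open>the i-th piece crosses branch set i, from the bridge entering it to the one leaving it\<close>
  have "\<forall>i. \<exists>ws. i < k \<longrightarrow> is_path (X (us ! i)) E ws \<and> hd ws = y (prv i) \<and> last ws = x i"
    using xy prv usV by (metis inner linked_path)
  then obtain Pc where Pc: "\<And>i. i < k \<Longrightarrow> is_path (X (us ! i)) E (Pc i) \<and> hd (Pc i) = y (prv i) \<and> last (Pc i) = x i"
    by metis
  have "\<exists>vs. is_cycle (U, E) vs \<and> k \<le> length vs"
  proof (rule cycle_from_pieces)
    show "X (us ! i) \<inter> X (us ! j) = {}" if "i < k" "j < k" "i \<noteq> j" for i j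
      using that usV usd disj unfolding k_def by (simp add: nth_eq_iff_index_eq)
    show "{last (Pc j), hd (Pc (Suc j))} \<in> E" if "Suc j < k" for j
      using that Pc xy prv_Suc by simp
    have "prv 0 = k - 1" "k - 1 < k" using k3 unfolding prv_def by simp_all
    then show "{last (Pc (k - 1)), hd (Pc 0)} \<in> E" using Pc xy k3 by simp
  qed (use Pc sub usV k3 in auto)
  then show ?thesis unfolding k_def .
qed

lemma longest_path:
  assumes "finite V" "v \<in> V"
  shows "\<exists>P. is_path V E P \<and> (\<forall>Q. is_path V E Q \<longrightarrow> length Q \<le> length P)"
proof -
  have "is_path V E [v]" using assms by (simp add: is_path_def)
  moreover have "length Q < Suc (card V)" if "is_path V E Q" for Q
    using that card_mono[OF assms(1)] unfolding is_path_def by (metis distinct_card le_imp_less_Suc)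
  ultimately show ?thesis by (metis Lattices_Big.ex_has_greatest_nat)
qed

lemma path_prefix_cycle:
  assumes P: "is_path V E P" and j: "2 \<le> j" "j < length P" and closing: "{P ! j, P ! 0} \<in> E"
  shows "is_cycle (V, E) (take (Suc j) P)"
proof -
  let ?vs = "take (Suc j) P"
  have len: "length ?vs = Suc j" using j by simp
  have "cycle_edges ?vs \<subseteq> E"
  proof
    fix e assume "e \<in> cycle_edges ?vs"
    then obtain i where i: "i < Suc j" "e = {?vs ! i, ?vs ! ((i + 1) mod Suc j)}"
      unfolding cycle_edges_def len by auto
    show "e \<in> E"
    proof (cases "i < j")
      case True
      then have "e = {P ! i, P ! Suc i}" "Suc i < length P" using i j by simp_all
      then show ?thesis using P path_edges_nth unfolding is_path_def by blast
    next
      case False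
      then have "i = j" using i by simp
      then have "e = {P ! j, P ! 0}" using i by simp
      then show ?thesis using closing by simp
    qed
  qed
  then show ?thesis using P j len set_take_subset[of "Suc j" P]
    unfolding is_cycle_def is_path_def by auto
qed

text \<open>If every vertex has more than d \<ge> 1 neighbours, then the first vertex of a longest
  path has all its neighbours on the path, one of them at position > d; closing the
  path there gives a cycle of length at least d + 2.\<close>

lemma long_cycle_min_degree:
  assumes fin: "finite V" and ne: "V \<noteq> {}" and E: "E \<subseteq> {{u, v} | u v. u \<in> V \<and> v \<in> V \<and> u \<noteq> v}"
    and deg: "\<And>v. v \<in> V \<Longrightarrow> d < card {w. {v, w} \<in> E}" and d: "1 \<le> d"
  shows "\<exists>vs. is_cycle (V, E) vs \<and> d + 2 \<le> length vs"
proof -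
  obtain P where P: "is_path V E P" and longest: "\<And>Q. is_path V E Q \<Longrightarrow> length Q \<le> length P"
    using longest_path[OF fin, of _ E] ne by blast
  define v0 where "v0 = hd P"
  have v0: "v0 = P ! 0" "v0 \<in> V" using P unfolding v0_def is_path_def by (auto simp: hd_conv_nth)
  have "{w. {v0, w} \<in> E} \<subseteq> (!) P ` {1..<length P}"
  proof
    fix w assume "w \<in> {w. {v0, w} \<in> E}"
    then have wE: "{v0, w} \<in> E" by simp
    then have "w \<noteq> v0" "w \<in> V" using E by (auto simp: doubleton_eq_iff)
    have "w \<in> set P"
    proof (rule ccontr)
      assume "w \<notin> set P"
      then have "is_path V E (w # P)"
        using P wE \<open>w \<in> V\<close> unfolding is_path_def v0_def by (auto simp: path_edges_Cons insert_commute)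
      then show False using longest by fastforce
    qed
    then obtain i where "i < length P" "P ! i = w" by (auto simp: in_set_conv_nth)
    moreover have "i \<noteq> 0" using \<open>w \<noteq> v0\<close> v0 calculation by metis
    ultimately show "w \<in> (!) P ` {1..<length P}" by force
  qed
  moreover have "\<exists>j. d < j \<and> j < length P \<and> {v0, P ! j} \<in> E"
  proof (rule ccontr)
    assume "\<not> ?thesis"
    then have "{w. {v0, w} \<in> E} \<subseteq> (!) P ` {1..d}" using calculation by fastforce
    then have "card {w. {v0, w} \<in> E} \<le> card ((!) P ` {1..d})" by (simp add: card_mono)
    also have "\<dots> \<le> d" using card_image_le[of "{1..d}" "(!) P"] by simp
    finally show False using deg[OF v0(2)] by simp
  qed
  then obtain j where j: "d < j" "j < length P" "{v0, P ! j} \<in> E" by blast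
  then have "is_cycle (V, E) (take (Suc j) P)"
    using P d v0 by (intro path_prefix_cycle) (auto simp: insert_commute)
  then show ?thesis using j by (intro exI[of _ "take (Suc j) P"]) auto
qed

text \<open>A graph with more than d \<ge> 1 times as many edges as vertices contains a cycle of
  length at least d + 2: repeatedly delete vertices of degree at most d, which keeps the
  edge density above d, until the minimum degree exceeds d.\<close>

lemma dense_long_cycle:
  fixes V :: "'b set" and E :: "'b set set"
  assumes "finite V" "E \<subseteq> {{u, v} | u v. u \<in> V \<and> v \<in> V \<and> u \<noteq> v}" "d * card V < card E" "1 \<le> d"
  shows "\<exists>vs. is_cycle (V, E) vs \<and> d + 2 \<le> length vs"
  using assms
proof (induction "card V" arbitrary: V E rule: less_induct)
  case less
  show ?case
  proof (cases "\<exists>v\<in>V. card {w. {v, w} \<in> E} \<le> d")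
    case True
    then obtain v where v: "v \<in> V" "card {w. {v, w} \<in> E} \<le> d" by blast
    define V' where "V' = V - {v}"
    define E' where "E' = {e\<in>E. v \<notin> e}"
    have cV: "card V = Suc (card V')" unfolding V'_def using v less.prems(1) by (metis card_Suc_Diff1)
    have "E - E' \<subseteq> (\<lambda>w. {v, w}) ` {w. {v, w} \<in> E}"
    proof
      fix e assume "e \<in> E - E'"
      then have "e \<in> E" "v \<in> e" unfolding E'_def by auto
      then obtain w where "e = {v, w}" using less.prems(2) by auto
      then show "e \<in> (\<lambda>w. {v, w}) ` {w. {v, w} \<in> E}" using \<open>e \<in> E\<close> by auto
    qed
    moreover have "finite {w. {v, w} \<in> E}"
      by (rule finite_subset[OF _ less.prems(1)]) (use less.prems(2) in \<open>auto simp: doubleton_eq_iff\<close>)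
    ultimately have "card (E - E') \<le> card {w. {v, w} \<in> E}"
      by (meson card_image_le card_mono finite_imageI le_trans)
    then have "card (E - E') \<le> d" using v(2) by linarith
    moreover have "card E \<le> card E' + card (E - E')"
      by (metis Diff_partition E'_def card_Un_le mem_Collect_eq subsetI)
    ultimately have "d * card V' < card E'" using less.prems(3) cV by (simp add: algebra_simps)
    moreover have "E' \<subseteq> {{u, w} | u w. u \<in> V' \<and> w \<in> V' \<and> u \<noteq> w}"
      using less.prems(2) unfolding E'_def V'_def by blast
    ultimately obtain vs where "is_cycle (V', E') vs" "d + 2 \<le> length vs"
      using less.hyps[of V' E'] less.prems(1,4) cV unfolding V'_def by auto
    moreover have "V' \<subseteq> V" "E' \<subseteq> E" unfolding V'_def E'_def by auto
    ultimately show ?thesis using is_cycle_mono by blast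
  next
    case False
    have "V \<noteq> {}" using less.prems(2,3) by auto
    then show ?thesis using False less.prems by (intro long_cycle_min_degree) auto
  qed
qed

text \<open>The heart of the argument: a set ES of minor edges, all realised by ports and linked to hubs
  with edges from EG, is sparse when EG has no cycles of length L or more, because a denser ES
  would contain a cycle of length \<ge> L + 2, which lifts to EG.\<close>

lemma colour_class_sparse:
  fixes V :: "'b set" and X :: "'b \<Rightarrow> 'a set" and port :: "'b set \<Rightarrow> 'b \<Rightarrow> 'a"
  assumes fin: "finite V"
    and ES: "ES \<subseteq> {{A, B} | A B. A \<in> V \<and> B \<in> V \<and> A \<noteq> B}"
    and disj: "\<And>A B. A \<in> V \<Longrightarrow> B \<in> V \<Longrightarrow> A \<noteq> B \<Longrightarrow> X A \<inter> X B = {}"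
    and sub: "\<And>A. A \<in> V \<Longrightarrow> X A \<subseteq> U"
    and ports: "\<And>e. e \<in> ES \<Longrightarrow> \<exists>A B. e = {A, B} \<and> {port e A, port e B} \<in> EG"
    and hub: "\<And>e A. e \<in> ES \<Longrightarrow> A \<in> e \<Longrightarrow> linked EG (X A) (hub A) (port e A)"
    and short: "\<And>vs. is_cycle (U, EG) vs \<Longrightarrow> length vs < L"
    and L: "1 \<le> L"
  shows "card ES \<le> L * card V"
proof (rule ccontr)
  assume "\<not> ?thesis"
  then obtain us where us: "is_cycle (V, ES) us" "L + 2 \<le> length us"
    using dense_long_cycle[OF fin ES _ L] by auto
  define P where "P A = {port e A | e. e \<in> ES \<and> A \<in> e}" for A
  have "\<exists>vs. is_cycle (U, EG) vs \<and> length us \<le> length vs"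
  proof (rule cycle_lift[OF us(1) disj sub])
    show "\<exists>x\<in>P A. \<exists>y\<in>P B. {x, y} \<in> EG" if e: "{A, B} \<in> ES" for A B
    proof -
      have "{port {A, B} A, port {A, B} B} \<in> EG"
        using ports[OF e] by (auto simp: doubleton_eq_iff insert_commute)
      moreover have "port {A, B} A \<in> P A" "port {A, B} B \<in> P B" using e unfolding P_def by auto
      ultimately show ?thesis by blast
    qed
    show "linked EG (X A) p q" if pq: "p \<in> P A" "q \<in> P A" for A p q
    proof -
      obtain e e' where "p = port e A" "e \<in> ES" "A \<in> e" "q = port e' A" "e' \<in> ES" "A \<in> e'"
        using pq unfolding P_def by blast
      then show ?thesis using linked_trans[OF linked_sym[OF hub] hub] by blast
    qed
  qed
  then show False using short us(2) by fastforce
qed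

lemma tree_root_walks:
  assumes "rooted_subtree G r T"
  shows "\<exists>h. \<forall>v\<in>fst T. \<exists>ws. ws \<noteq> [] \<and> hd ws = h \<and> last ws = v \<and> set ws \<subseteq> fst T \<and>
                             path_edges ws \<subseteq> snd T \<and> card (path_edges ws) \<le> r"
proof -
  obtain h where h: "\<forall>v\<in>fst T. dist_le T h v r"
    using assms unfolding rooted_subtree_def by blast
  have "\<exists>ws. ws \<noteq> [] \<and> hd ws = h \<and> last ws = v \<and> set ws \<subseteq> fst T \<and>
             path_edges ws \<subseteq> snd T \<and> card (path_edges ws) \<le> r" if v: "v \<in> fst T" for v
  proof -
    obtain ws where ws: "is_walk T ws" "hd ws = h" "last ws = v" "length ws \<le> r + 1"
      using h v unfolding dist_le_def by blast
    have "card (path_edges ws) \<le> r" using card_path_edges[of ws] ws(4) by linarith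
    moreover have "ws \<noteq> []" "set ws \<subseteq> fst T" using ws(1) unfolding is_walk_def by auto
    ultimately show ?thesis using ws(2,3) walk_path_edges[OF ws(1)] by (intro exI[of _ ws]) simp
  qed
  then show ?thesis by blast
qed

lemma minor_root_walks:
  fixes G :: "'a graph" and Ts :: "'a graph set"
  assumes "\<And>T. T \<in> Ts \<Longrightarrow> rooted_subtree G r T"
  obtains W hub where "\<And>T v. T \<in> Ts \<Longrightarrow> v \<in> fst T \<Longrightarrow>
      W T v \<noteq> [] \<and> hd (W T v) = hub T \<and> last (W T v) = v \<and> set (W T v) \<subseteq> fst T \<and>
      path_edges (W T v) \<subseteq> snd T \<and> card (path_edges (W T v)) \<le> r"
proof -
  define R where "R T h v ws \<longleftrightarrow> ws \<noteq> [] \<and> hd ws = h \<and> last ws = v \<and> set ws \<subseteq> fst T \<and>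
      path_edges ws \<subseteq> snd T \<and> card (path_edges ws) \<le> r" for T :: "'a graph" and h v ws
  define hub where "hub T = (SOME h. \<forall>v\<in>fst T. \<exists>ws. R T h v ws)" for T
  define W where "W T v = (SOME ws. R T (hub T) v ws)" for T v
  have "R T (hub T) v (W T v)" if T: "T \<in> Ts" and v: "v \<in> fst T" for T v
  proof -
    have "\<exists>h. \<forall>v\<in>fst T. \<exists>ws. R T h v ws"
      using tree_root_walks[OF assms[OF T]] unfolding R_def .
    then have "\<forall>v\<in>fst T. \<exists>ws. R T (hub T) v ws" unfolding hub_def by (rule someI_ex)
    then show ?thesis using v unfolding W_def by (blast intro: someI_ex)
  qed
  then show thesis using that unfolding R_def by blast
qed

lemma minor_edge_ports:
  assumes model: "shallow_minor_model G r Ts H"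
  obtains port where "\<And>e. e \<in> snd H \<Longrightarrow>
      \<exists>A B. e = {A, B} \<and> (\<forall>T\<in>e. port e T \<in> fst T) \<and> {port e A, port e B} \<in> snd G"
proof -
  define ok where "ok e g \<longleftrightarrow> (\<exists>A B. e = {A, B} \<and> (\<forall>T\<in>e. g T \<in> fst T) \<and> {g A, g B} \<in> snd G)"
    for e and g :: "'a graph \<Rightarrow> 'a"
  have ex_ok: "\<exists>g. ok e g" if e: "e \<in> snd H" for e
  proof -
    obtain A B where AB: "e = {A, B}" "A \<noteq> B" "trees_adjacent G A B"
      using model e unfolding shallow_minor_model_def by blast
    then obtain x y where xy: "x \<in> fst A" "y \<in> fst B" "{x, y} \<in> snd G"
      unfolding trees_adjacent_def by blast
    define g where "g T = (if T = A then x else y)" for T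
    have "g A = x" "g B = y" using AB(2) unfolding g_def by simp_all
    then have "e = {A, B} \<and> (\<forall>T\<in>e. g T \<in> fst T) \<and> {g A, g B} \<in> snd G" using AB xy by auto
    then show "\<exists>g. ok e g" unfolding ok_def by blast
  qed
  show thesis
  proof (rule that)
    fix e assume "e \<in> snd H"
    then have "ok e (SOME g. ok e g)" by (rule someI_ex[OF ex_ok])
    then show "\<exists>A B. e = {A, B} \<and> (\<forall>T\<in>e. (SOME g. ok e g) T \<in> fst T) \<and>
        {(SOME g. ok e g) A, (SOME g. ok e g) B} \<in> snd G"
      unfolding ok_def .
  qed
qed

locale realised_minor =
  fixes G :: "'a graph" and r :: nat and Ts :: "'a graph set" and H :: "'a graph graph"
    and hub :: "'a graph \<Rightarrow> 'a" and W :: "'a graph \<Rightarrow> 'a \<Rightarrow> 'a list"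
    and port :: "'a graph set \<Rightarrow> 'a graph \<Rightarrow> 'a"
  assumes model: "shallow_minor_model G r Ts H"
    and root_walk: "\<And>T v. T \<in> Ts \<Longrightarrow> v \<in> fst T \<Longrightarrow>
      W T v \<noteq> [] \<and> hd (W T v) = hub T \<and> last (W T v) = v \<and> set (W T v) \<subseteq> fst T \<and>
      path_edges (W T v) \<subseteq> snd T \<and> card (path_edges (W T v)) \<le> r"
    and port: "\<And>e. e \<in> snd H \<Longrightarrow>
      \<exists>A B. e = {A, B} \<and> (\<forall>T\<in>e. port e T \<in> fst T) \<and> {port e A, port e B} \<in> snd G"
begin

lemma branch_sets:
  shows "\<And>A B. A \<in> fst H \<Longrightarrow> B \<in> fst H \<Longrightarrow> A \<noteq> B \<Longrightarrow> fst A \<inter> fst B = {}"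
    and "\<And>A. A \<in> fst H \<Longrightarrow> fst A \<subseteq> fst G"
    and "snd H \<subseteq> {{A, B} | A B. A \<in> fst H \<and> B \<in> fst H \<and> A \<noteq> B}"
proof -
  note m = model[unfolded shallow_minor_model_def]
  show "\<And>A B. A \<in> fst H \<Longrightarrow> B \<in> fst H \<Longrightarrow> A \<noteq> B \<Longrightarrow> fst A \<inter> fst B = {}"
    using m by blast
  show "fst A \<subseteq> fst G" if "A \<in> fst H" for A
  proof -
    have "rooted_subtree G r A" using m that by blast
    then show ?thesis unfolding rooted_subtree_def by blast
  qed
  show "snd H \<subseteq> {{A, B} | A B. A \<in> fst H \<and> B \<in> fst H \<and> A \<noteq> B}"
    using m by blast
qed

lemma port_walk:
  assumes "e \<in> snd H" "A \<in> e"
  defines "w \<equiv> W A (port e A)"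
  shows "w \<noteq> []" "hd w = hub A" "last w = port e A" "set w \<subseteq> fst A"
    and "path_edges w \<subseteq> snd G" "card (path_edges w) \<le> r"
proof -
  have A: "A \<in> Ts" "port e A \<in> fst A"
    using assms(1,2) port model unfolding shallow_minor_model_def by blast+
  then have "snd A \<subseteq> snd G" using model unfolding shallow_minor_model_def rooted_subtree_def by blast
  then show "w \<noteq> []" "hd w = hub A" "last w = port e A" "set w \<subseteq> fst A"
    "path_edges w \<subseteq> snd G" "card (path_edges w) \<le> r"
    using root_walk[OF A] unfolding w_def by blast+
qed

definition trace :: "('a set \<Rightarrow> nat) \<Rightarrow> 'a graph set \<Rightarrow> nat set" where
  "trace c e = insert (c (port e ` e)) (\<Union>A\<in>e. c ` path_edges (W A (port e A)))"

lemma trace_bounds: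
  assumes col: "c ` snd G \<subseteq> {..<M}" and e: "e \<in> snd H"
  shows "trace c e \<subseteq> {..<M}" "card (trace c e) \<le> 2 * r + 1"
proof -
  obtain A B where AB: "e = {A, B}" "{port e A, port e B} \<in> snd G" using port[OF e] by blast
  let ?walk_colours = "\<lambda>T. c ` path_edges (W T (port e T))"
  have "port e ` e = {port e A, port e B}" using AB(1) by auto
  then have first: "c (port e ` e) \<in> {..<M}" using AB(2) col by auto
  have walks: "?walk_colours T \<subseteq> {..<M}" "card (?walk_colours T) \<le> r" if "T \<in> e" for T
    using port_walk(5,6)[OF e that] col card_image_le[OF finite_path_edges] by (blast, meson le_trans)
  show "trace c e \<subseteq> {..<M}" unfolding trace_def using first walks(1) by blast
  have union: "(\<Union>T\<in>e. ?walk_colours T) = ?walk_colours A \<union> ?walk_colours B" using AB(1) by simp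
  have "card (?walk_colours A) \<le> r" "card (?walk_colours B) \<le> r" using walks(2) AB(1) by simp_all
  then have "card (\<Union>T\<in>e. ?walk_colours T) \<le> r + r"
    unfolding union using card_Un_le[of "?walk_colours A" "?walk_colours B"] by linarith
  moreover have "finite (\<Union>T\<in>e. ?walk_colours T)" using union by (simp add: finite_path_edges)
  ultimately show "card (trace c e) \<le> 2 * r + 1" unfolding trace_def by (simp add: card_insert_if)
qed

text \<open>If every cycle of G of length at least L sees more than 2r + 1 colours, the edges of H
  sharing a trace S are few: the colour class of S in G has no such cycle, so
  colour_class_sparse applies with the root walks as links between ports.\<close>

lemma trace_class_sparse:
  assumes fin: "finite (fst H)" and L: "1 \<le> L"
    and many_colours: "\<And>vs. is_cycle G vs \<Longrightarrow> L \<le> length vs \<Longrightarrow> 2 * r + 1 < card (c ` cycle_edges vs)"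
    and S: "card S \<le> 2 * r + 1" "finite S"
  shows "card {e \<in> snd H. trace c e = S} \<le> L * card (fst H)"
proof -
  define EG where "EG = {d \<in> snd G. c d \<in> S}"
  show ?thesis
  proof (rule colour_class_sparse[where X = fst and U = "fst G" and EG = EG and port = port and hub = hub])
    show "{e \<in> snd H. trace c e = S} \<subseteq> {{A, B} | A B. A \<in> fst H \<and> B \<in> fst H \<and> A \<noteq> B}"
      using branch_sets(3) by blast
    show "\<exists>A B. e = {A, B} \<and> {port e A, port e B} \<in> EG" if e: "e \<in> {e \<in> snd H. trace c e = S}" for e
    proof -
      obtain A B where AB: "e = {A, B}" "{port e A, port e B} \<in> snd G" using port e by blast
      have "port e ` e = {port e A, port e B}" using AB(1) by auto
      then have "c {port e A, port e B} \<in> S" using e unfolding trace_def by auto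
      then show ?thesis using AB unfolding EG_def by blast
    qed
    show "linked EG (fst A) (hub A) (port e A)" if e: "e \<in> {e \<in> snd H. trace c e = S}" and A: "A \<in> e" for e A
    proof -
      have "e \<in> snd H" using e by simp
      note w = port_walk[OF this A]
      have "c ` path_edges (W A (port e A)) \<subseteq> S" using e A unfolding trace_def by blast
      then have "path_edges (W A (port e A)) \<subseteq> EG" using w(5) unfolding EG_def by blast
      then show ?thesis unfolding linked_def using w(1-4) by blast
    qed
    show "length vs < L" if "is_cycle (fst G, EG) vs" for vs
    proof -
      have "is_cycle (fst G, snd G) vs" using is_cycle_mono[OF that] unfolding EG_def by blast
      then have "is_cycle G vs" by simp
      moreover have "card (c ` cycle_edges vs) \<le> card S"
        using that S(2) unfolding is_cycle_def EG_def by (intro card_mono) auto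
      ultimately show ?thesis using many_colours S(1) by fastforce
    qed
  qed (use fin L branch_sets(1,2) in auto)
qed

end

text \<open>Edge bound for shallow minors: if c uses M colours and every cycle of G of length at
  least L sees more than 2r + 1 colours, a shallow minor H at depth r has at most 2^M L |H|
  edges, since the edges of H fall into at most 2^M trace classes, each sparse.\<close>

lemma shallow_minor_edge_bound:
  fixes G :: "'a graph" and c :: "'a set \<Rightarrow> nat"
  assumes col: "c ` snd G \<subseteq> {..<M}"
    and many_colours: "\<And>vs. is_cycle G vs \<Longrightarrow> L \<le> length vs \<Longrightarrow> 2 * r + 1 < card (c ` cycle_edges vs)"
    and L: "1 \<le> L"
    and model: "shallow_minor_model G r Ts H" and fin: "finite (fst H)"
  shows "card (snd H) \<le> 2 ^ M * (L * card (fst H))"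
proof -
  have trees: "\<And>T. T \<in> Ts \<Longrightarrow> rooted_subtree G r T" using model unfolding shallow_minor_model_def by blast
  obtain W hub where "\<And>T v. T \<in> Ts \<Longrightarrow> v \<in> fst T \<Longrightarrow>
      W T v \<noteq> [] \<and> hd (W T v) = hub T \<and> last (W T v) = v \<and> set (W T v) \<subseteq> fst T \<and>
      path_edges (W T v) \<subseteq> snd T \<and> card (path_edges (W T v)) \<le> r"
    using minor_root_walks[OF trees] by blast
  moreover obtain port where "\<And>e. e \<in> snd H \<Longrightarrow>
      \<exists>A B. e = {A, B} \<and> (\<forall>T\<in>e. port e T \<in> fst T) \<and> {port e A, port e B} \<in> snd G"
    using minor_edge_ports[OF model] by blast
  ultimately interpret realised_minor G r Ts H hub W port
    using model by unfold_locales
  have class_sparse: "card {e \<in> snd H. trace c e = S} \<le> L * card (fst H)" for S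
  proof (cases "\<exists>e\<in>snd H. trace c e = S")
    case True
    then have "card S \<le> 2 * r + 1" "finite S"
      using trace_bounds[OF col] by (auto intro: finite_subset)
    then show ?thesis using trace_class_sparse[OF fin L many_colours] by blast
  next
    case False
    then have "{e \<in> snd H. trace c e = S} = {}" by blast
    then show ?thesis by (metis card.empty le0)
  qed
  have "snd H = (\<Union>S\<in>Pow {..<M}. {e \<in> snd H. trace c e = S})" using trace_bounds(1)[OF col] by auto
  then have "card (snd H) = card (\<Union>S\<in>Pow {..<M}. {e \<in> snd H. trace c e = S})" by (rule arg_cong)
  also have "\<dots> \<le> (\<Sum>S\<in>Pow {..<M}. card {e \<in> snd H. trace c e = S})"
    by (rule card_UN_le) simp
  also have "\<dots> \<le> (\<Sum>S\<in>Pow {..<M}. L * card (fst H))" by (intro sum_mono class_sparse)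
  also have "\<dots> = 2 ^ M * (L * card (fst H))" by (simp add: card_Pow)
  finally show ?thesis .
qed

text \<open>An optimal colouring witnessing N_f exists: labelling all edges differently shows that the
  set of admissible numbers of colours is nonempty.\<close>

lemma N_f_colouring:
  fixes G :: "'a graph" and f :: "nat \<Rightarrow> nat"
  assumes sg: "simple_graph G" and f: "\<forall>x. f x \<le> x"
  shows "\<exists>c :: 'a set \<Rightarrow> nat. c ` snd G \<subseteq> {..<N_f f G p} \<and>
           (\<forall>vs. is_cycle G vs \<longrightarrow> min (f (length vs)) (p + 1) \<le> card (c ` cycle_edges vs))"
proof -
  let ?good = "\<lambda>k. \<exists>c :: 'a set \<Rightarrow> nat. c ` snd G \<subseteq> {..<k} \<and>
      (\<forall>vs. is_cycle G vs \<longrightarrow> min (f (length vs)) (p + 1) \<le> card (c ` cycle_edges vs))"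
  have "snd G \<subseteq> Pow (fst G)" "finite (fst G)" using sg unfolding simple_graph_def by auto
  then have "finite (snd G)" by (meson finite_Pow_iff finite_subset)
  then obtain h where h: "bij_betw h (snd G) {0..<card (snd G)}" using ex_bij_betw_finite_nat by blast
  have "card (h ` cycle_edges vs) = length vs" if "is_cycle G vs" for vs
  proof -
    have "cycle_edges vs \<subseteq> snd G" "distinct vs" "3 \<le> length vs" using that unfolding is_cycle_def by auto
    then show ?thesis
      using card_image[OF inj_on_subset[OF bij_betw_imp_inj_on[OF h]]] card_cycle_edges by metis
  qed
  then have "?good (card (snd G))" using h f unfolding bij_betw_def
    by (intro exI[of _ h]) (auto intro: min.coboundedI1)
  then have "?good (LEAST k. ?good k)" by (rule LeastI)
  then show ?thesis unfolding N_f_def .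
qed

lemma nabla_le:
  fixes G :: "'a graph" and B :: real
  assumes "0 \<le> B"
    and "\<And>Ts H. shallow_minor_model G r Ts H \<Longrightarrow> finite (fst H) \<Longrightarrow>
           real (card (snd H)) \<le> B * real (card (fst H))"
  shows "nabla r G \<le> B"
  unfolding nabla_def
proof (rule cSup_least)
  have "shallow_minor_model G r {} ({}, {})" unfolding shallow_minor_model_def by auto
  then show "{real (card (snd H)) / real (card (fst H)) | H. \<exists>Ts. shallow_minor_model G r Ts H} \<noteq> {}"
    by blast
next
  fix x assume "x \<in> {real (card (snd H)) / real (card (fst H)) | H. \<exists>Ts. shallow_minor_model G r Ts H}"
  then obtain H Ts where x: "x = real (card (snd H)) / real (card (fst H))"
    and model: "shallow_minor_model G r Ts H" by blast
  show "x \<le> B"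
  proof (cases "card (fst H) = 0")
    case False
    then show ?thesis unfolding x using assms(2)[OF model] card.infinite
      by (fastforce simp: divide_le_eq)
  qed (use x assms(1) in simp)
qed

theorem mainTheorem4:
  fixes C :: "'a graph set" and f :: "nat \<Rightarrow> nat"
  assumes "\<forall>G\<in>C. simple_graph G"
    and "\<forall>M. \<exists>x. f x \<ge> M"
    and "mono f"
    and "\<forall>x. f x \<le> x"
    and "\<forall>r\<ge>1. \<exists>M. \<forall>G\<in>C. N_f f G r \<le> M"
  shows "bounded_expansion C"
  unfolding bounded_expansion_def
proof
  fix r :: nat
  obtain M where M: "\<forall>G\<in>C. N_f f G (2 * r + 1) \<le> M" using assms(5) by auto
  obtain L where fL: "2 * r + 2 \<le> f L" using assms(2) by blast
  have "1 \<le> L" using fL assms(4) by (metis add_leE le_trans one_add_one)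
  have "nabla r G \<le> real (2 ^ M * L)" if G: "G \<in> C" for G
  proof -
    obtain c :: "'a set \<Rightarrow> nat" where c_range: "c ` snd G \<subseteq> {..<N_f f G (2 * r + 1)}"
      and c_cycles: "\<And>vs. is_cycle G vs \<Longrightarrow> min (f (length vs)) (2 * r + 2) \<le> card (c ` cycle_edges vs)"
      using N_f_colouring[of G f "2 * r + 1"] assms(1,4) G by auto
    have many_colours: "2 * r + 1 < card (c ` cycle_edges vs)" if "is_cycle G vs" "L \<le> length vs" for vs
      using c_cycles[OF that(1)] monoD[OF assms(3) that(2)] fL by linarith
    have c_M: "c ` snd G \<subseteq> {..<M}" using c_range M G by fastforce
    show ?thesis
    proof (rule nabla_le)
      fix Ts H assume "shallow_minor_model G r Ts H" "finite (fst H)"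
      then have "card (snd H) \<le> 2 ^ M * L * card (fst H)"
        using shallow_minor_edge_bound[OF c_M many_colours \<open>1 \<le> L\<close>] by (simp add: mult.assoc)
      then show "real (card (snd H)) \<le> real (2 ^ M * L) * real (card (fst H))"
        by (metis of_nat_mono of_nat_mult)
    qed simp
  qed
  then show "\<exists>B::real. \<forall>G\<in>C. nabla r G \<le> B" by blast
qed

end
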